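(* Let the sequences be generated by Algorithm iMBA and suppose Assumptions 2 and 3 hold. Then: (i) the sequence $\{(\overline x^k,\xi^k,V^k)\}_{k\in\mathbb{N}}$ is bounded, where $\overline x^k:=\overline x^{k,j_k}$; (ii) there exists $\beta_L>0$ with $\|L^k\|\le\beta_L$ for all $k$; (iii) $\{\mu_k\}_{k\in\mathbb{N}}$ is bounded, hence there exists $\beta_{\mathcal Q}>0$ with $\|\mathcal Q_k\|\le\beta_{\mathcal Q}$ for all $k$.
   Context: Problem (P): $\min_{x\in\mathbb{R}^n}F(x):=g_0(x)+\delta_{\mathbb{R}^m_-}(g(x))+\phi(x)$, where $g=(g_1,\dots,g_m)^\top$ and $\delta_{\mathbb{R}^m_-}$ is the indicator of the nonpositive orthant. Assumption 1 (standing): (i) $g_0:\mathbb{R}^n\to(-\infty,\infty]$ is locally Lipschitz and upper-$\mathcal C^2$ at every point of an open convex set $\mathcal O\supset\Gamma:=\{x:g(x)\in\mathbb{R}^m_-\}\neq\emptyset$, and each $g_i:\mathbb{R}^n\to\mathbb{R}$, $i\in[m]$, is locally Lipschitz and upper-$\mathcal C^2$ at every point of $\mathbb{R}^n$; (ii) $\phi:\mathbb{R}^n\to\mathbb{R}$ is convex and $F$ is bounded below on $\Gamma$. $\partial$ denotes the limiting subdifferential; $\partial g(x):=\{V\in\mathbb{R}^{n\times m}: V_i\in\partial g_i(x)\ \forall i\}$. Define $G(x,s,V,L):=g(s)+V^\top(x-s)+\tfrac12\|x-s\|^2L$. Algorithm iMBA (parameters $0<\mu_{\min}\le\mu_{\max}$,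 $0<L_{\min}\le L_{\max}$, $M,\beta_C,\beta_S,\alpha>0$, $\tau>1$, $x^0\in\Gamma$): at iteration $k$ choose $\xi^k\in\partial g_0(x^k)$, $V^k\in\partial g(x^k)$, $\mu_{k,0}\in[\mu_{\min},\mu_{\max}]$, $L^{k,0}\in[L_{\min},L_{\max}]^m$; for $j=0,1,\dots$ choose self-adjoint $\mathcal Q_{k,j}$ with $\mu_{k,j}\mathcal I\preceq\mathcal Q_{k,j}\preceq(\mu_{k,j}+M)\mathcal I$, let $F_{k,j}(x):=g_0(x^k)+\langle\xi^k,x-x^k\rangle+\frac12\langle x-x^k,\mathcal Q_{k,j}(x-x^k)\rangle+\phi(x)$, $\Gamma_{k,j}:=\{x:G(x,x^k,V^k,L^{k,j})\in\mathbb{R}^m_-\}$, $\overline x^{k,j}$ the unique minimizer of $F_{k,j}$ on $\Gamma_{k,j}$, and compute $y^{k,j}$, $v^{k,j}\in\partial\phi(y^{k,j})$, $\lambda^{k,j}\in\mathbb{R}^m_+$ with $F_{k,j}(y^{k,j})\le F_{k,j}(x^k)$, $(-\langle\lambda^{k,j},G(y^{k,j},x^k,V^k,L^{k,j})\rangle)_++\|[G(y^{k,j},x^k,V^k,L^{k,j})]_+\|_\infty\le\frac{\beta_C}2\|y^{k,j}-x^k\|^2$ and $\|\xi^k+\mathcal Q_{k,j}(y^{k,j}-x^k)+v^{k,j}+V^k\lambda^{k,j}+\langle L^{k,j},\lambda^{k,j}\rangle(y^{k,j}-x^k)\|\le\beta_S\|y^{k,j}-x^k\|$. If $g(y^{k,j})\in\mathbb{R}^m_-$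 and $F(y^{k,j})\le F(x^k)-\frac\alpha2\|y^{k,j}-x^k\|^2$, accept ($j_k:=j$); else if $g(y^{k,j})\notin\mathbb{R}^m_-$ set $L^{k,j+1}=\tau L^{k,j}$, $\mu_{k,j+1}=\mu_{k,j}$; else $L^{k,j+1}=L^{k,j}$, $\mu_{k,j+1}=\tau\mu_{k,j}$. Then $x^{k+1}:=y^{k,j_k}$, $(\mu_k,\mathcal Q_k,L^k,v^{k+1},\lambda^{k+1}):=(\mu_{k,j_k},\mathcal Q_{k,j_k},L^{k,j_k},v^{k,j_k},\lambda^{k,j_k})$, $\overline x^k:=\overline x^{k,j_k}$. Assumption 2: for each $k,j$, the multifunction $x\mapsto G(x,x^k,V^k,L^{k,j})-\mathbb{R}^m_-$ is metrically subregular at $(\overline x^{k,j},0)$. Assumption 3: $\{x^k\}$ is bounded; $\omega(x^0)$ denotes its set of cluster points. *)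

theory Defs
  imports "HOL-Analysis.Analysis"
begin

definition frechet_subdiff :: "('a::euclidean_space \<Rightarrow> real) \<Rightarrow> 'a \<Rightarrow> 'a set" where
  "frechet_subdiff f x =
     {v. \<forall>e>0. \<exists>d>0. \<forall>y\<in>ball x d. f y \<ge> f x + v \<bullet> (y - x) - e * norm (y - x)}"

definition limiting_subdiff :: "('a::euclidean_space \<Rightarrow> real) \<Rightarrow> 'a \<Rightarrow> 'a set" where
  "limiting_subdiff f x =
     {v. \<exists>xs vs. xs \<longlonglongrightarrow> x \<and> (\<lambda>k. f (xs k)) \<longlonglongrightarrow> f x \<and> vs \<longlonglongrightarrow> v \<and>
              (\<forall>k. vs k \<in> frechet_subdiff f (xs k))}"

definition loc_lipschitz_at :: "('a::euclidean_space \<Rightarrow> real) \<Rightarrow> 'a \<Rightarrow> bool" where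
  "loc_lipschitz_at f x \<longleftrightarrow> (\<exists>r>0. \<exists>K. K-lipschitz_on (ball x r) f)"

text \<open>Upper-C2 at a point (for finite-valued f), via the characterization of
  Rockafellar--Wets Thm 10.33: f minus a quadratic is concave near x.\<close>
definition upper_C2_at :: "('a::euclidean_space \<Rightarrow> real) \<Rightarrow> 'a \<Rightarrow> bool" where
  "upper_C2_at f x \<longleftrightarrow>
     (\<exists>r>0. \<exists>\<rho>\<ge>0. concave_on (ball x r) (\<lambda>z. f z - \<rho> / 2 * (norm z)\<^sup>2))"

definition nonpos_orth :: "(real^'m) set" where
  "nonpos_orth = {u. \<forall>i. u $ i \<le> 0}"

definition Fobj :: "('a \<Rightarrow> real) \<Rightarrow> ('a \<Rightarrow> real^'m) \<Rightarrow> ('a \<Rightarrow> real) \<Rightarrow> 'a \<Rightarrow> ereal" where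
  "Fobj g0 g \<phi> x = (if g x \<in> nonpos_orth then ereal (g0 x + \<phi> x) else \<infinity>)"

text \<open>G(x,s,V,L) = g(s) + V^T (x - s) + 1/2 |x-s|^2 L; V is stored column-wise
  (V $ i is the i-th column, an element of R^n).\<close>
definition Gfun :: "('a::euclidean_space \<Rightarrow> real^'m) \<Rightarrow> 'a \<Rightarrow> 'a \<Rightarrow> 'a^'m \<Rightarrow> real^'m \<Rightarrow> real^'m" where
  "Gfun g x s V L = g s + (\<chi> i. V $ i \<bullet> (x - s)) + ((1/2) * (norm (x - s))\<^sup>2) *\<^sub>R L"

definition Fmodel :: "('a::euclidean_space \<Rightarrow> real) \<Rightarrow> ('a \<Rightarrow> real) \<Rightarrow> 'a \<Rightarrow> 'a \<Rightarrow> ('a \<Rightarrow> 'a) \<Rightarrow> 'a \<Rightarrow> real" where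
  "Fmodel g0 \<phi> xk \<xi> Q x = g0 xk + \<xi> \<bullet> (x - xk) + (1/2) * ((x - xk) \<bullet> Q (x - xk)) + \<phi> x"

definition metric_subregular_orth :: "('a::euclidean_space \<Rightarrow> real^'m) \<Rightarrow> 'a \<Rightarrow> bool" where
  "metric_subregular_orth H xbar \<longleftrightarrow> H xbar \<in> nonpos_orth \<and>
     (\<exists>\<kappa>>0. \<exists>e>0. \<forall>x\<in>ball xbar e.
        infdist x {z. H z \<in> nonpos_orth} \<le> \<kappa> * infdist 0 {H x - u | u. u \<in> nonpos_orth})"

end

theory Submission
  imports Defs
begin

text \<open>An upper-\<open>C\<^sup>2\<close> function has, on every compact part of its domain, bounded limiting
  subgradients and a quadratic upper model \<open>f y \<le> f x + v \<bullet> (y - x) + \<rho>/2 \<parallel>y - x\<parallel>\<^sup>2\<close> with one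
  modulus \<open>\<rho>\<close>. The iterates stay in a bounded part of the feasible set, so this bounds \<open>\<xi>\<^sup>k\<close>
  and \<open>V\<^sup>k\<close>, and the strong convexity of the subproblems (\<open>\<mu>\<^sub>k\<^sub>,\<^sub>j \<ge> \<mu>min\<close>) bounds the trial
  points and \<open>xbar\<^sup>k\<close>. The upper model of \<open>g\<close> shows that a trial point is feasible as soon as
  all entries of \<open>L\<close> exceed \<open>\<beta>C + \<rho>\<close>, and the upper model of \<open>g0\<close> shows that it gives
  sufficient decrease as soon as \<open>\<mu> \<ge> \<rho>0 + \<alpha>\<close>. Hence each backtracking parameter is only
  enlarged while it lies below a fixed threshold, and never exceeds \<open>\<tau>\<close> times that threshold.\<close>

lemma scaled_norm_power2_expand:
  fixes x y :: "'a::real_inner"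
  shows "c / 2 * (norm y)\<^sup>2 = c / 2 * (norm x)\<^sup>2 + c * (x \<bullet> (y - x)) + c / 2 * (norm (y - x))\<^sup>2"
  by (simp add: power2_norm_eq_inner algebra_simps inner_commute)

lemma quadratic_le_affine_imp_le:
  fixes a b c t :: real
  assumes "a > 0" "t \<ge> 0" "b \<ge> 0" "c \<ge> 0" "a * t\<^sup>2 \<le> b * t + c"
  shows "t \<le> max 1 ((b + c) / a)"
proof (cases "t \<le> 1")
  case False
  then have "c \<le> c * t" using \<open>c \<ge> 0\<close> by (simp add: mult_le_cancel_left1)
  then have "a * t * t \<le> (b + c) * t" using assms by (simp add: power2_eq_square algebra_simps)
  then have "a * t \<le> b + c" using False by simp
  then have "t \<le> (b + c) / a" using \<open>a > 0\<close> by (simp add: field_simps)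
  then show ?thesis by simp
qed simp

lemma quadratic_dominates_affine:
  fixes a b n \<delta> :: real
  assumes "a \<ge> 0" "b \<ge> 0" "0 < \<delta>" "\<delta> \<le> n"
  shows "a + b * n \<le> (a / \<delta>\<^sup>2 + b / \<delta>) * n\<^sup>2"
proof -
  have "a \<le> a / \<delta>\<^sup>2 * n\<^sup>2"
    using assms by (simp add: field_simps power_mono mult_left_mono)
  moreover have "b * n * \<delta> \<le> b * n * n" using assms by (intro mult_left_mono) auto
  then have "b * n \<le> b / \<delta> * n\<^sup>2"
    using assms by (simp add: field_simps power2_eq_square)
  ultimately show ?thesis by (simp add: distrib_right)
qed

lemma onorm_self_adjoint_le:
  fixes Q :: "'a::euclidean_space \<Rightarrow> 'a"
  assumes lin: "linear Q" and sym: "\<And>u w. Q u \<bullet> w = u \<bullet> Q w"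
    and psd: "\<And>u. 0 \<le> u \<bullet> Q u" and upper: "\<And>u. u \<bullet> Q u \<le> c * (norm u)\<^sup>2"
  shows "onorm Q \<le> c"
proof (rule onorm_le)
  obtain e :: 'a where "norm e = 1" using vector_choose_size zero_le_one by blast
  then have "c \<ge> 0" using psd[of e] upper[of e] by simp
  fix u
  show "norm (Q u) \<le> c * norm u"
  proof (cases "u = 0 \<or> Q u = 0")
    case True
    then show ?thesis using linear_0[OF lin] \<open>c \<ge> 0\<close> by auto
  next
    case False
    then have "norm u > 0" "norm (Q u) > 0" by auto
    define w where "w = (norm u / norm (Q u)) *\<^sub>R Q u"
    have "norm w = norm u" "w \<bullet> Q u = norm u * norm (Q u)"
      using False by (simp_all add: w_def power2_norm_eq_inner[symmetric] power2_eq_square)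
    have "4 * (w \<bullet> Q u) = (u + w) \<bullet> Q (u + w) - (u - w) \<bullet> Q (u - w)"
      using sym[of w u] by (simp add: linear_add[OF lin] linear_diff[OF lin] inner_add inner_diff inner_commute)
    also have "\<dots> \<le> c * (norm (u + w))\<^sup>2" using psd[of "u - w"] upper[of "u + w"] by linarith
    also have "\<dots> \<le> c * (norm u + norm w)\<^sup>2"
      using \<open>c \<ge> 0\<close> by (intro mult_left_mono power_mono norm_triangle_ineq) auto
    finally have "norm u * norm (Q u) \<le> norm u * (c * norm u)"
      using \<open>norm w = norm u\<close> \<open>w \<bullet> Q u = norm u * norm (Q u)\<close>
      by (simp add: power2_eq_square algebra_simps)
    then show ?thesis using \<open>norm u > 0\<close> by simp
  qed
qed

lemma convex_on_lower_affine_growth: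
  fixes \<phi> :: "'a::euclidean_space \<Rightarrow> real"
  assumes cvx: "convex_on UNIV \<phi>"
  obtains b where "b \<ge> 0" "\<And>x y. norm x \<le> r \<Longrightarrow> \<phi> x - \<phi> y \<le> b * (norm (y - x) + 1)"
proof -
  have "continuous_on (cball 0 (r + 1)) \<phi>"
    using convex_on_continuous[OF open_UNIV cvx] continuous_on_subset by blast
  then obtain B where "B \<ge> 0" and B: "\<And>z. norm z \<le> r + 1 \<Longrightarrow> \<bar>\<phi> z\<bar> \<le> B"
    using continuous_on_compact_bound[OF compact_cball] by (metis mem_cball_0 real_norm_def)
  have "\<phi> x - \<phi> y \<le> 2 * B * (norm (y - x) + 1)" if x: "norm x \<le> r" for x y
  proof (cases "norm (y - x) \<le> 1")
    case True
    then have "norm y \<le> r + 1" using x norm_triangle_ineq[of x "y - x"] by simp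
    then have "\<phi> x - \<phi> y \<le> 2 * B" using B[of x] B[of y] x by fastforce
    also have "\<dots> \<le> 2 * B * (norm (y - x) + 1)" using \<open>B \<ge> 0\<close> by (simp add: distrib_left)
    finally show ?thesis .
  next
    case False
    define t where "t = 1 / norm (y - x)"
    have t: "0 < t" "t \<le> 1" "t * norm (y - x) = 1" using False by (auto simp: t_def divide_le_eq_1)
    define p where "p = (1 - t) *\<^sub>R x + t *\<^sub>R y"
    have "p - x = t *\<^sub>R (y - x)" by (simp add: p_def algebra_simps)
    then have "norm (p - x) = 1" using t by simp
    then have "norm p \<le> r + 1" using x t norm_triangle_ineq[of x "p - x"] by simp
    then have "\<phi> x - \<phi> p \<le> 2 * B" using B[of x] B[of p] x by fastforce
    moreover have "\<phi> p \<le> (1 - t) * \<phi> x + t * \<phi> y"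
      unfolding p_def using convex_onD[OF cvx, of t x y] t by simp
    ultimately have "t * (\<phi> x - \<phi> y) \<le> 2 * B" by (simp add: algebra_simps)
    then have "\<phi> x - \<phi> y \<le> 2 * B * norm (y - x)"
      using t by (simp add: t_def field_simps)
    also have "\<dots> \<le> 2 * B * (norm (y - x) + 1)" using \<open>B \<ge> 0\<close> by (simp add: distrib_left)
    finally show ?thesis .
  qed
  then show ?thesis using that[of "2 * B"] \<open>B \<ge> 0\<close> by simp
qed

lemma backtracking_le:
  fixes p :: "nat \<Rightarrow> real"
  assumes "\<tau> \<ge> 0"
    and step: "\<And>j. j < n \<Longrightarrow> p (Suc j) = p j \<or> (p j < T \<and> p (Suc j) = \<tau> * p j)"
  shows "p n \<le> max (p 0) (\<tau> * T)"
  using step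
proof (induction n)
  case (Suc n)
  then have IH: "p n \<le> max (p 0) (\<tau> * T)" by simp
  from Suc.prems[OF lessI] show ?case
  proof
    assume "p n < T \<and> p (Suc n) = \<tau> * p n"
    then show ?thesis using \<open>\<tau> \<ge> 0\<close> mult_left_mono[of "p n" T \<tau>] by simp
  qed (metis IH)
qed simp

lemma backtracking_ge:
  fixes p :: "nat \<Rightarrow> real"
  assumes "\<tau> \<ge> 1" "p 0 \<ge> 0"
    and step: "\<And>j. j < n \<Longrightarrow> p (Suc j) = p j \<or> p (Suc j) = \<tau> * p j"
  shows "p 0 \<le> p n"
  using step
proof (induction n)
  case (Suc n)
  then have "p 0 \<le> p n" by simp
  then show ?case using Suc.prems[of n] assms(1,2) mult_right_mono[of 1 \<tau> "p n"] by auto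
qed simp

lemma loc_lipschitz_imp_continuous_on:
  assumes "\<And>z. z \<in> U \<Longrightarrow> loc_lipschitz_at f z"
  shows "continuous_on U f"
proof (rule continuous_at_imp_continuous_on, rule ballI)
  fix z assume "z \<in> U"
  then obtain r K where "r > 0" "K-lipschitz_on (ball z r) f"
    using assms unfolding loc_lipschitz_at_def by blast
  then show "isCont f z"
    using lipschitz_on_continuous_on continuous_on_eq_continuous_at by (metis centre_in_ball open_ball)
qed

section \<open>Upper-\<open>C\<^sup>2\<close> functions\<close>

text \<open>Concavity along the chord gives \<open>h (x + t d) - h x \<ge> t (h y - h x)\<close> for \<open>d = y - x\<close>, while
  concavity at the midpoint of \<open>x \<plusminus> t d\<close> together with the Frechet lower bound at \<open>x - t d\<close> gives
  \<open>h (x + t d) - h x \<le> t (u \<bullet> d) + o(t)\<close>.\<close>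
lemma concave_on_frechet_subdiff_le:
  fixes h :: "'a::euclidean_space \<Rightarrow> real"
  assumes conc: "concave_on B h" and B: "open B" and x: "x \<in> B" and y: "y \<in> B"
    and u: "u \<in> frechet_subdiff h x"
  shows "h y \<le> h x + u \<bullet> (y - x)"
proof -
  define d where "d = y - x"
  have d1: "norm d + 1 > 0" using norm_ge_zero[of d] by linarith
  have "h y - h x \<le> u \<bullet> d + e" if "e > 0" for e
  proof -
    define e' where "e' = e / (norm d + 1)"
    have e': "e' > 0" "e' * norm d \<le> e"
      using \<open>e > 0\<close> d1 by (simp_all add: e'_def field_simps)
    obtain \<delta> where "\<delta> > 0" and frechet: "\<And>z. z \<in> ball x \<delta> \<Longrightarrow> h z \<ge> h x + u \<bullet> (z - x) - e' * norm (z - x)"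
      using u e' unfolding frechet_subdiff_def by blast
    obtain r where "r > 0" "ball x r \<subseteq> B" using B x open_contains_ball by blast
    define \<epsilon> where "\<epsilon> = min \<delta> r"
    define t where "t = min 1 (\<epsilon> / (2 * (norm d + 1)))"
    have "\<epsilon> > 0" using \<open>\<delta> > 0\<close> \<open>r > 0\<close> by (simp add: \<epsilon>_def)
    then have t: "0 < t" "t \<le> 1" using d1 by (simp_all add: t_def)
    have "t * norm d \<le> \<epsilon> / (2 * (norm d + 1)) * norm d"
      by (intro mult_right_mono) (auto simp: t_def)
    also have "\<dots> < \<epsilon>" using \<open>\<epsilon> > 0\<close> d1 by (simp add: field_simps add_nonneg_pos)
    finally have small: "norm (t *\<^sub>R d) < \<epsilon>" using t by simp
    then have plus: "x + t *\<^sub>R d \<in> B" and minus: "x - t *\<^sub>R d \<in> B" "x - t *\<^sub>R d \<in> ball x \<delta>"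
      using \<open>ball x r \<subseteq> B\<close> by (auto simp: \<epsilon>_def dist_norm)
    have chord: "(1 - t) * h x + t * h y \<le> h (x + t *\<^sub>R d)"
      using concave_onD[OF conc, of t x y] t x y by (simp add: d_def algebra_simps)
    have midpoint_eq: "(1/2) *\<^sub>R (x + t *\<^sub>R d) + (1/2) *\<^sub>R (x - t *\<^sub>R d) = x"
      by (simp add: scaleR_add_right scaleR_diff_right) (simp flip: scaleR_add_left)
    have midpoint: "(1/2) * h (x + t *\<^sub>R d) + (1/2) * h (x - t *\<^sub>R d) \<le> h x"
      using concave_onD[OF conc, of "1/2" "x + t *\<^sub>R d" "x - t *\<^sub>R d"] plus minus
      by (simp add: midpoint_eq)
    have "h (x - t *\<^sub>R d) \<ge> h x - t * (u \<bullet> d) - e' * (t * norm d)"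
      using frechet[OF minus(2)] t by simp
    then have "t * (h y - h x) \<le> t * (u \<bullet> d) + e' * norm d * t"
      using chord midpoint by (simp add: algebra_simps)
    also have "\<dots> \<le> t * (u \<bullet> d + e)" using e' t by (simp add: algebra_simps)
    finally show ?thesis using t by simp
  qed
  then have "h y - h x \<le> u \<bullet> d" by (rule field_le_epsilon)
  then show ?thesis by (simp add: d_def)
qed

lemma frechet_subdiff_minus_quadratic:
  fixes f :: "'a::euclidean_space \<Rightarrow> real"
  assumes w: "w \<in> frechet_subdiff f x" and \<rho>: "\<rho> \<ge> 0"
  shows "w - \<rho> *\<^sub>R x \<in> frechet_subdiff (\<lambda>z. f z - \<rho> / 2 * (norm z)\<^sup>2) x"
  unfolding frechet_subdiff_def
proof (intro CollectI allI impI)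
  fix e :: real assume "e > 0"
  then have "e / 2 > 0" by simp
  then obtain \<delta> where "\<delta> > 0" and frechet: "\<And>y. y \<in> ball x \<delta> \<Longrightarrow> f y \<ge> f x + w \<bullet> (y - x) - e / 2 * norm (y - x)"
    using w unfolding frechet_subdiff_def by blast
  define \<delta>' where "\<delta>' = min \<delta> (e / (\<rho> + 1))"
  have "f y - \<rho> / 2 * (norm y)\<^sup>2 \<ge> f x - \<rho> / 2 * (norm x)\<^sup>2 + (w - \<rho> *\<^sub>R x) \<bullet> (y - x) - e * norm (y - x)"
    if y: "y \<in> ball x \<delta>'" for y
  proof -
    have "norm (y - x) < e / (\<rho> + 1)" using y by (simp add: \<delta>'_def dist_norm norm_minus_commute)
    have "\<rho> * norm (y - x) \<le> (\<rho> + 1) * norm (y - x)" by (simp add: mult_right_mono)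
    also have "\<dots> \<le> e" using \<open>norm (y - x) < e / (\<rho> + 1)\<close> \<rho> by (simp add: pos_less_divide_eq mult.commute)
    finally have "\<rho> * norm (y - x) * norm (y - x) \<le> e * norm (y - x)"
      by (rule mult_right_mono) simp
    then have "\<rho> / 2 * (norm (y - x))\<^sup>2 \<le> e / 2 * norm (y - x)"
      by (simp add: power2_eq_square algebra_simps)
    moreover have "y \<in> ball x \<delta>" using y by (simp add: \<delta>'_def)
    moreover have "(w - \<rho> *\<^sub>R x) \<bullet> (y - x) = w \<bullet> (y - x) - \<rho> * (x \<bullet> (y - x))"
      by (simp add: inner_diff_left)
    ultimately show ?thesis
      using frechet[of y] scaled_norm_power2_expand[of \<rho> y x] by linarith
  qed
  moreover have "\<delta>' > 0" using \<open>\<delta> > 0\<close> \<open>e > 0\<close> \<rho> by (simp add: \<delta>'_def)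
  ultimately show "\<exists>d>0. \<forall>y\<in>ball x d. f y - \<rho> / 2 * (norm y)\<^sup>2 \<ge> f x - \<rho> / 2 * (norm x)\<^sup>2 + (w - \<rho> *\<^sub>R x) \<bullet> (y - x) - e * norm (y - x)"
    by blast
qed

lemma limiting_subdiff_upper_C2_le:
  fixes f :: "'a::euclidean_space \<Rightarrow> real"
  assumes conc: "concave_on B (\<lambda>z. f z - \<rho> / 2 * (norm z)\<^sup>2)" and B: "open B"
    and x: "x \<in> B" and y: "y \<in> B" and \<rho>: "\<rho> \<ge> 0"
    and v: "v \<in> limiting_subdiff f x"
  shows "f y \<le> f x + v \<bullet> (y - x) + \<rho> / 2 * (norm (y - x))\<^sup>2"
proof -
  define h where "h = (\<lambda>z. f z - \<rho> / 2 * (norm z)\<^sup>2)"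
  obtain xs vs where xs: "xs \<longlonglongrightarrow> x" and fxs: "(\<lambda>k. f (xs k)) \<longlonglongrightarrow> f x"
    and vs: "vs \<longlonglongrightarrow> v" and frechet: "\<And>k. vs k \<in> frechet_subdiff f (xs k)"
    using v unfolding limiting_subdiff_def by blast
  have "eventually (\<lambda>k. xs k \<in> B) sequentially"
    using xs B x by (simp add: tendsto_def)
  then have "eventually (\<lambda>k. h y \<le> h (xs k) + (vs k - \<rho> *\<^sub>R xs k) \<bullet> (y - xs k)) sequentially"
    by eventually_elim
      (use concave_on_frechet_subdiff_le[OF conc B _ y frechet_subdiff_minus_quadratic[OF frechet \<rho>]]
       in \<open>simp add: h_def\<close>)
  moreover have "(\<lambda>k. h (xs k) + (vs k - \<rho> *\<^sub>R xs k) \<bullet> (y - xs k)) \<longlonglongrightarrow> h x + (v - \<rho> *\<^sub>R x) \<bullet> (y - x)"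
    unfolding h_def by (intro tendsto_intros fxs xs vs)
  ultimately have "h y \<le> h x + (v - \<rho> *\<^sub>R x) \<bullet> (y - x)"
    using tendsto_lowerbound by (metis trivial_limit_sequentially)
  moreover have "(v - \<rho> *\<^sub>R x) \<bullet> (y - x) = v \<bullet> (y - x) - \<rho> * (x \<bullet> (y - x))"
    by (simp add: inner_diff_left)
  ultimately show ?thesis
    unfolding h_def using scaled_norm_power2_expand[of \<rho> y x] by linarith
qed

text \<open>Compactness turns the pointwise radii and moduli of the upper-\<open>C\<^sup>2\<close> property into a
  uniform radius (a Lebesgue number of a finite subcover) and a uniform modulus (their sum).\<close>
lemma upper_C2_uniform_local:
  fixes f :: "'a::euclidean_space \<Rightarrow> real"
  assumes U: "open U" and uc: "\<forall>z\<in>U. upper_C2_at f z" and S: "compact S" and SU: "S \<subseteq> U"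
  obtains \<delta> \<rho> where "\<delta> > 0" "\<rho> \<ge> 0" "\<And>x. x \<in> S \<Longrightarrow> ball x \<delta> \<subseteq> U"
    "\<And>x v y. \<lbrakk>x \<in> S; v \<in> limiting_subdiff f x; y \<in> ball x \<delta>\<rbrakk>
       \<Longrightarrow> f y \<le> f x + v \<bullet> (y - x) + \<rho> / 2 * (norm (y - x))\<^sup>2"
proof -
  have "\<exists>r \<rho>. r > 0 \<and> \<rho> \<ge> 0 \<and> ball z r \<subseteq> U \<and> concave_on (ball z r) (\<lambda>w. f w - \<rho> / 2 * (norm w)\<^sup>2)"
    if z: "z \<in> U" for z
  proof -
    obtain r0 \<rho> where r0: "r0 > 0" "\<rho> \<ge> 0" "concave_on (ball z r0) (\<lambda>w. f w - \<rho> / 2 * (norm w)\<^sup>2)"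
      using uc z unfolding upper_C2_at_def by blast
    obtain r1 where r1: "r1 > 0" "ball z r1 \<subseteq> U" using U z open_contains_ball by blast
    have "concave_on (ball z (min r0 r1)) (\<lambda>w. f w - \<rho> / 2 * (norm w)\<^sup>2)"
      using r0(3) unfolding concave_on_def by (rule convex_on_subset) auto
    then show ?thesis using r0 r1 by (intro exI[of _ "min r0 r1"] exI[of _ \<rho>]) auto
  qed
  then obtain R P where RP: "\<And>z. z \<in> U \<Longrightarrow> R z > 0 \<and> P z \<ge> 0 \<and> ball z (R z) \<subseteq> U \<and>
      concave_on (ball z (R z)) (\<lambda>w. f w - P z / 2 * (norm w)\<^sup>2)"
    by metis
  have "S \<subseteq> (\<Union>z\<in>S. ball z (R z))" using RP SU by force
  then obtain F where F: "F \<subseteq> S" "finite F" "S \<subseteq> (\<Union>z\<in>F. ball z (R z))"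
    by (rule compactE_image[OF S open_ball])
  obtain \<delta> where "\<delta> > 0" and lebesgue: "\<And>x. x \<in> S \<Longrightarrow> \<exists>G\<in>(\<lambda>z. ball z (R z)) ` F. ball x \<delta> \<subseteq> G"
    by (rule Heine_Borel_lemma[OF S F(3)]) auto
  define \<rho> where "\<rho> = (\<Sum>z\<in>F. P z)"
  have P_le: "P z \<le> \<rho>" and P_nonneg: "0 \<le> P z" if "z \<in> F" for z
    unfolding \<rho>_def using F RP SU that by (auto intro!: member_le_sum)
  have "\<rho> \<ge> 0" unfolding \<rho>_def using P_nonneg by (simp add: sum_nonneg)
  moreover have "ball x \<delta> \<subseteq> U" if "x \<in> S" for x
    using lebesgue[OF that] RP F SU by blast
  moreover have "f y \<le> f x + v \<bullet> (y - x) + \<rho> / 2 * (norm (y - x))\<^sup>2"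
    if x: "x \<in> S" and v: "v \<in> limiting_subdiff f x" and y: "y \<in> ball x \<delta>" for x v y
  proof -
    obtain z where z: "z \<in> F" "ball x \<delta> \<subseteq> ball z (R z)" using lebesgue[OF x] by blast
    moreover have "x \<in> ball x \<delta>" using \<open>\<delta> > 0\<close> by simp
    ultimately have "x \<in> ball z (R z)" "y \<in> ball z (R z)" using y by blast+
    then have "f y \<le> f x + v \<bullet> (y - x) + P z / 2 * (norm (y - x))\<^sup>2"
      using limiting_subdiff_upper_C2_le[of "ball z (R z)" f "P z"] RP z F SU v by blast
    also have "\<dots> \<le> f x + v \<bullet> (y - x) + \<rho> / 2 * (norm (y - x))\<^sup>2"
      using P_le[OF z(1)] by (simp add: mult_right_mono)
    finally show ?thesis .
  qed
  ultimately show ?thesis using that \<open>\<delta> > 0\<close> by blast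
qed

lemma subdiff_norm_le_of_upper_model:
  fixes f :: "'a::euclidean_space \<Rightarrow> real"
  assumes s: "s > 0"
    and model: "\<And>y. norm (y - x) = s \<Longrightarrow> f y \<le> f x + v \<bullet> (y - x) + \<rho> / 2 * s\<^sup>2"
    and osc: "\<And>y. norm (y - x) = s \<Longrightarrow> f x - f y \<le> C"
  shows "s * norm v \<le> C + \<rho> / 2 * s\<^sup>2"
proof (cases "v = 0")
  case True
  obtain u :: 'a where "norm u = s" using vector_choose_size s by (metis less_imp_le)
  then show ?thesis using model[of "x + u"] osc[of "x + u"] True by simp
next
  case False
  define y where "y = x - (s / norm v) *\<^sub>R v"
  have "norm (y - x) = s" and "v \<bullet> (y - x) = - s * norm v"
    using False s by (simp_all add: y_def power2_norm_eq_inner[symmetric] power2_eq_square)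
  then show ?thesis using model[of y] osc[of y] by linarith
qed

lemma quadratic_upper_model_extend:
  fixes f :: "'a::real_inner \<Rightarrow> real"
  assumes "\<delta> > 0" "\<rho> \<ge> 0" "C \<ge> 0" "norm v \<le> Vb"
    and local: "norm (y - x) < \<delta> \<Longrightarrow> f y \<le> f x + v \<bullet> (y - x) + \<rho> / 2 * (norm (y - x))\<^sup>2"
    and osc: "f y - f x \<le> C"
  shows "f y \<le> f x + v \<bullet> (y - x) + (\<rho> + 2 * (C / \<delta>\<^sup>2 + Vb / \<delta>)) / 2 * (norm (y - x))\<^sup>2"
proof -
  have "Vb \<ge> 0" using \<open>norm v \<le> Vb\<close> by (rule order_trans[OF norm_ge_zero])
  have split: "(\<rho> + 2 * (C / \<delta>\<^sup>2 + Vb / \<delta>)) / 2 * (norm (y - x))\<^sup>2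
      = \<rho> / 2 * (norm (y - x))\<^sup>2 + (C / \<delta>\<^sup>2 + Vb / \<delta>) * (norm (y - x))\<^sup>2"
    by (simp add: algebra_simps)
  show ?thesis
  proof (cases "norm (y - x) < \<delta>")
    case True
    have "0 \<le> (C / \<delta>\<^sup>2 + Vb / \<delta>) * (norm (y - x))\<^sup>2"
      using assms(1,3) \<open>Vb \<ge> 0\<close> by simp
    then show ?thesis using local[OF True] split by linarith
  next
    case False
    have "- (v \<bullet> (y - x)) \<le> norm v * norm (y - x)"
      using norm_cauchy_schwarz[of "- v" "y - x"] by simp
    also have "\<dots> \<le> Vb * norm (y - x)" using \<open>norm v \<le> Vb\<close> by (rule mult_right_mono) simp
    finally have "- (v \<bullet> (y - x)) \<le> Vb * norm (y - x)" .
    moreover have "C + Vb * norm (y - x) \<le> (C / \<delta>\<^sup>2 + Vb / \<delta>) * (norm (y - x))\<^sup>2"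
      using False assms(1,3) \<open>Vb \<ge> 0\<close> by (intro quadratic_dominates_affine) auto
    moreover have "\<rho> / 2 * (norm (y - x))\<^sup>2 \<ge> 0" using \<open>\<rho> \<ge> 0\<close> by simp
    ultimately show ?thesis using osc split by linarith
  qed
qed

lemma upper_C2_on_compact:
  fixes f :: "'a::euclidean_space \<Rightarrow> real"
  assumes U: "open U" and uc: "\<forall>z\<in>U. upper_C2_at f z" and cont: "continuous_on U f"
    and S: "compact S" and SU: "S \<subseteq> U"
  obtains \<rho> Vb where "\<rho> \<ge> 0"
    "\<And>x v. \<lbrakk>x \<in> S; v \<in> limiting_subdiff f x\<rbrakk> \<Longrightarrow> norm v \<le> Vb"
    "\<And>x v y. \<lbrakk>x \<in> S; v \<in> limiting_subdiff f x; y \<in> S\<rbrakk>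
       \<Longrightarrow> f y \<le> f x + v \<bullet> (y - x) + \<rho> / 2 * (norm (y - x))\<^sup>2"
proof -
  obtain \<delta> \<rho> where "\<delta> > 0" "\<rho> \<ge> 0" and ball_U: "\<And>x. x \<in> S \<Longrightarrow> ball x \<delta> \<subseteq> U"
    and local: "\<And>x v y. \<lbrakk>x \<in> S; v \<in> limiting_subdiff f x; y \<in> ball x \<delta>\<rbrakk>
       \<Longrightarrow> f y \<le> f x + v \<bullet> (y - x) + \<rho> / 2 * (norm (y - x))\<^sup>2"
    using upper_C2_uniform_local[OF U uc S SU] by blast
  define s where "s = \<delta> / 2"
  have s: "0 < s" "s < \<delta>" using \<open>\<delta> > 0\<close> by (auto simp: s_def)
  define T where "T = {a + b | a b. a \<in> S \<and> b \<in> cball 0 s}"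
  have near_T: "y \<in> T" if "x \<in> S" "norm (y - x) \<le> s" for x y
    unfolding T_def using that by (intro CollectI exI[of _ x] exI[of _ "y - x"]) simp
  have "T \<subseteq> U"
    using ball_U s by (fastforce simp: T_def dist_norm)
  moreover have "compact T" unfolding T_def by (intro compact_sums S compact_cball)
  ultimately obtain B where "B \<ge> 0" and B: "\<And>t. t \<in> T \<Longrightarrow> \<bar>f t\<bar> \<le> B"
    using continuous_on_compact_bound continuous_on_subset[OF cont] by (metis real_norm_def)
  have B_S: "\<bar>f x\<bar> \<le> B" if "x \<in> S" for x
    using B near_T[OF that, of x] s by simp
  define Vb where "Vb = (2 * B + \<rho> / 2 * s\<^sup>2) / s"
  have subdiff_bound: "norm v \<le> Vb" if x: "x \<in> S" and v: "v \<in> limiting_subdiff f x" for x v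
  proof -
    have "s * norm v \<le> 2 * B + \<rho> / 2 * s\<^sup>2"
    proof (rule subdiff_norm_le_of_upper_model[OF s(1)])
      fix y assume y: "norm (y - x) = s"
      then show "f y \<le> f x + v \<bullet> (y - x) + \<rho> / 2 * s\<^sup>2"
        using local[OF x v, of y] s by (simp add: dist_norm norm_minus_commute)
      show "f x - f y \<le> 2 * B" using B_S[OF x] B[OF near_T[OF x]] y by fastforce
    qed
    then show ?thesis using s by (simp add: Vb_def field_simps)
  qed
  have "Vb \<ge> 0" unfolding Vb_def using \<open>B \<ge> 0\<close> \<open>\<rho> \<ge> 0\<close> s by simp
  define \<rho>' where "\<rho>' = \<rho> + 2 * (2 * B / \<delta>\<^sup>2 + Vb / \<delta>)"
  have "\<rho>' \<ge> 0" unfolding \<rho>'_def using \<open>B \<ge> 0\<close> \<open>Vb \<ge> 0\<close> \<open>\<rho> \<ge> 0\<close> \<open>\<delta> > 0\<close> by simp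
  have "f y \<le> f x + v \<bullet> (y - x) + \<rho>' / 2 * (norm (y - x))\<^sup>2"
    if x: "x \<in> S" and v: "v \<in> limiting_subdiff f x" and y: "y \<in> S" for x v y
    unfolding \<rho>'_def
  proof (rule quadratic_upper_model_extend[OF \<open>\<delta> > 0\<close> \<open>\<rho> \<ge> 0\<close> _ subdiff_bound[OF x v]])
    show "0 \<le> 2 * B" using \<open>B \<ge> 0\<close> by simp
    show "f y - f x \<le> 2 * B" using B_S[OF x] B_S[OF y] by linarith
    assume "norm (y - x) < \<delta>"
    then have "y \<in> ball x \<delta>" by (simp add: dist_norm norm_minus_commute)
    then show "f y \<le> f x + v \<bullet> (y - x) + \<rho> / 2 * (norm (y - x))\<^sup>2" by (rule local[OF x v])
  qed
  with that \<open>\<rho>' \<ge> 0\<close> subdiff_bound show ?thesis by blast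
qed

lemma upper_C2_components_on_compact:
  fixes g :: "'a::euclidean_space \<Rightarrow> real^'m"
  assumes U: "open U" and uc: "\<And>i. \<forall>z\<in>U. upper_C2_at (\<lambda>w. g w $ i) z"
    and cont: "\<And>i. continuous_on U (\<lambda>w. g w $ i)" and S: "compact S" and SU: "S \<subseteq> U"
  obtains \<rho> Vb where "\<rho> \<ge> 0"
    "\<And>x V. \<lbrakk>x \<in> S; \<And>i. V $ i \<in> limiting_subdiff (\<lambda>w. g w $ i) x\<rbrakk> \<Longrightarrow> norm V \<le> Vb"
    "\<And>x v y i. \<lbrakk>x \<in> S; v \<in> limiting_subdiff (\<lambda>w. g w $ i) x; y \<in> S\<rbrakk>
       \<Longrightarrow> g y $ i \<le> g x $ i + v \<bullet> (y - x) + \<rho> / 2 * (norm (y - x))\<^sup>2"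
proof -
  have "\<exists>\<rho> Vb. \<rho> \<ge> 0 \<and> (\<forall>x\<in>S. \<forall>v\<in>limiting_subdiff (\<lambda>w. g w $ i) x. norm v \<le> Vb \<and>
          (\<forall>y\<in>S. g y $ i \<le> g x $ i + v \<bullet> (y - x) + \<rho> / 2 * (norm (y - x))\<^sup>2))" for i
    using upper_C2_on_compact[OF U uc cont S SU] by metis
  then obtain \<rho> Vb where \<rho>: "\<And>i. \<rho> i \<ge> 0" and bound:
    "\<And>i x v. \<lbrakk>x \<in> S; v \<in> limiting_subdiff (\<lambda>w. g w $ i) x\<rbrakk> \<Longrightarrow> norm v \<le> Vb i \<and>
       (\<forall>y\<in>S. g y $ i \<le> g x $ i + v \<bullet> (y - x) + \<rho> i / 2 * (norm (y - x))\<^sup>2)"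
    by metis
  have "norm V \<le> (\<Sum>i\<in>UNIV. Vb i)"
    if x: "x \<in> S" and V: "\<And>i. V $ i \<in> limiting_subdiff (\<lambda>w. g w $ i) x" for x V
  proof -
    have "norm V \<le> (\<Sum>i\<in>UNIV. norm (V $ i))"
      unfolding norm_vec_def by (rule L2_set_le_sum) simp
    also have "\<dots> \<le> (\<Sum>i\<in>UNIV. Vb i)" using bound[OF x V] by (simp add: sum_mono)
    finally show ?thesis .
  qed
  moreover have "g y $ i \<le> g x $ i + v \<bullet> (y - x) + (\<Sum>i\<in>UNIV. \<rho> i) / 2 * (norm (y - x))\<^sup>2"
    if "x \<in> S" "v \<in> limiting_subdiff (\<lambda>w. g w $ i) x" "y \<in> S" for x v y i
  proof -
    have "\<rho> i \<le> (\<Sum>i\<in>UNIV. \<rho> i)" using \<rho> by (simp add: member_le_sum)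
    then have "\<rho> i / 2 * (norm (y - x))\<^sup>2 \<le> (\<Sum>i\<in>UNIV. \<rho> i) / 2 * (norm (y - x))\<^sup>2"
      by (intro mult_right_mono divide_right_mono) auto
    moreover have "g y $ i \<le> g x $ i + v \<bullet> (y - x) + \<rho> i / 2 * (norm (y - x))\<^sup>2"
      using bound[OF that(1,2)] that(3) by blast
    ultimately show ?thesis by linarith
  qed
  moreover have "(\<Sum>i\<in>UNIV. \<rho> i) \<ge> 0" using \<rho> by (simp add: sum_nonneg)
  ultimately show ?thesis using that by blast
qed

section \<open>Runs of iMBA\<close>

lemma Gfun_self: "Gfun g s s V L = g s"
  by (simp add: Gfun_def vec_eq_iff)

lemma Fmodel_sublevel_norm_le:
  assumes "\<mu> > 0" and strong: "\<And>u. \<mu> * (norm u)\<^sup>2 \<le> u \<bullet> Q u" and "norm \<xi> \<le> c"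
    and "b \<ge> 0" and growth: "\<phi> xk - \<phi> z \<le> b * (norm (z - xk) + 1)"
    and sublevel: "Fmodel g0 \<phi> xk \<xi> Q z \<le> Fmodel g0 \<phi> xk \<xi> Q xk"
  shows "norm (z - xk) \<le> max 1 ((c + 2 * b) / (\<mu> / 2))"
proof -
  define d where "d = z - xk"
  have "\<xi> \<bullet> d + 1/2 * (d \<bullet> Q d) \<le> \<phi> xk - \<phi> z"
    using sublevel by (simp add: Fmodel_def d_def)
  moreover have "- (\<xi> \<bullet> d) \<le> c * norm d"
    using norm_cauchy_schwarz[of "- \<xi>" d] mult_right_mono[OF \<open>norm \<xi> \<le> c\<close> norm_ge_zero[of d]]
    by simp
  ultimately have quad: "\<mu> / 2 * (norm d)\<^sup>2 \<le> (c + b) * norm d + b"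
    using strong[of d] growth by (simp add: d_def algebra_simps)
  have "c \<ge> 0" using \<open>norm \<xi> \<le> c\<close> by (rule order_trans[OF norm_ge_zero])
  have "norm d \<le> max 1 ((c + b + b) / (\<mu> / 2))"
    by (rule quadratic_le_affine_imp_le) (use quad \<open>c \<ge> 0\<close> \<open>b \<ge> 0\<close> \<open>\<mu> > 0\<close> in auto)
  then show ?thesis by (simp add: d_def algebra_simps)
qed

lemma component_le_of_residual_le:
  fixes G :: "real^'m"
  assumes "max 0 a + Max (range (\<lambda>i. max 0 (G $ i))) \<le> c"
  shows "G $ i \<le> c"
proof -
  have "max 0 (G $ i) \<le> Max (range (\<lambda>i. max 0 (G $ i)))" by (rule Max_ge) auto
  then show ?thesis using assms by linarith
qed

locale imba_run =
  fixes g0 :: "'a::euclidean_space \<Rightarrow> real"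
    and g :: "'a \<Rightarrow> real^'m"
    and \<phi> :: "'a \<Rightarrow> real"
    and Oset :: "'a set"
    and \<mu>min \<mu>max Lmin Lmax M \<beta>C \<alpha> \<tau> :: real
    and x \<xi> :: "nat \<Rightarrow> 'a"
    and V :: "nat \<Rightarrow> 'a^'m"
    and \<mu> :: "nat \<Rightarrow> nat \<Rightarrow> real"
    and L :: "nat \<Rightarrow> nat \<Rightarrow> real^'m"
    and Q :: "nat \<Rightarrow> nat \<Rightarrow> 'a \<Rightarrow> 'a"
    and xbar y :: "nat \<Rightarrow> nat \<Rightarrow> 'a"
    and lam :: "nat \<Rightarrow> nat \<Rightarrow> real^'m"
    and jk :: "nat \<Rightarrow> nat"
  assumes O_open: "open Oset"
    and Gamma_sub_O: "{z. g z \<in> nonpos_orth} \<subseteq> Oset"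
    and g0_lip: "\<And>z. z \<in> Oset \<Longrightarrow> loc_lipschitz_at g0 z"
    and g0_uC2: "\<forall>z\<in>Oset. upper_C2_at g0 z"
    and g_lip: "\<And>i z. loc_lipschitz_at (\<lambda>w. g w $ i) z"
    and g_uC2: "\<And>i z. upper_C2_at (\<lambda>w. g w $ i) z"
    and phi_convex: "convex_on UNIV \<phi>"
    and mu_min_pos: "0 < \<mu>min"
    and M_nonneg: "0 \<le> M"
    and par_L: "0 < Lmin" "Lmin \<le> Lmax"
    and tau_ge_1: "1 \<le> \<tau>"
    and x0: "g (x 0) \<in> nonpos_orth"
    and xi_sub: "\<And>k. \<xi> k \<in> limiting_subdiff g0 (x k)"
    and V_sub: "\<And>k i. V k $ i \<in> limiting_subdiff (\<lambda>w. g w $ i) (x k)"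
    and mu0: "\<And>k. \<mu>min \<le> \<mu> k 0" "\<And>k. \<mu> k 0 \<le> \<mu>max"
    and L0: "\<And>k i. Lmin \<le> L k 0 $ i" "\<And>k i. L k 0 $ i \<le> Lmax"
    and Q_linear: "\<And>k. linear (Q k (jk k))"
    and Q_symmetric: "\<And>k u w. Q k (jk k) u \<bullet> w = u \<bullet> Q k (jk k) w"
    and Q_lower: "\<And>k j u. j \<le> jk k \<Longrightarrow> \<mu> k j * (norm u)\<^sup>2 \<le> u \<bullet> Q k j u"
    and Q_upper: "\<And>k u. u \<bullet> Q k (jk k) u \<le> (\<mu> k (jk k) + M) * (norm u)\<^sup>2"
    and xbar_min: "\<And>k z. Gfun g z (x k) (V k) (L k (jk k)) \<in> nonpos_orth \<Longrightarrow>
          Fmodel g0 \<phi> (x k) (\<xi> k) (Q k (jk k)) (xbar k (jk k)) \<le> Fmodel g0 \<phi> (x k) (\<xi> k) (Q k (jk k)) z"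
    and y_desc: "\<And>k j. j \<le> jk k \<Longrightarrow>
          Fmodel g0 \<phi> (x k) (\<xi> k) (Q k j) (y k j) \<le> Fmodel g0 \<phi> (x k) (\<xi> k) (Q k j) (x k)"
    and y_feas: "\<And>k j. j \<le> jk k \<Longrightarrow>
          max 0 (- (lam k j \<bullet> Gfun g (y k j) (x k) (V k) (L k j)))
          + Max (range (\<lambda>i. max 0 (Gfun g (y k j) (x k) (V k) (L k j) $ i)))
          \<le> \<beta>C / 2 * (norm (y k j - x k))\<^sup>2"
    and accept: "\<And>k. g (y k (jk k)) \<in> nonpos_orth"
    and reject: "\<And>k j. \<lbrakk>j < jk k; g (y k j) \<in> nonpos_orth\<rbrakk> \<Longrightarrow>
          \<not> Fobj g0 g \<phi> (y k j) \<le> Fobj g0 g \<phi> (x k) - ereal (\<alpha> / 2 * (norm (y k j - x k))\<^sup>2)"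
    and upd_L: "\<And>k j. \<lbrakk>j < jk k; g (y k j) \<notin> nonpos_orth\<rbrakk> \<Longrightarrow>
          L k (Suc j) = \<tau> *\<^sub>R L k j \<and> \<mu> k (Suc j) = \<mu> k j"
    and upd_mu: "\<And>k j. \<lbrakk>j < jk k; g (y k j) \<in> nonpos_orth\<rbrakk> \<Longrightarrow>
          L k (Suc j) = L k j \<and> \<mu> k (Suc j) = \<tau> * \<mu> k j"
    and x_next: "\<And>k. x (Suc k) = y k (jk k)"
    and x_bounded: "bounded (range x)"
begin

lemma iterate_feasible: "g (x k) \<in> nonpos_orth"
  by (induction k) (simp_all add: x0 accept x_next)

lemma g_component_continuous: "continuous_on UNIV (\<lambda>w. g w $ i)"
  using g_lip by (intro loc_lipschitz_imp_continuous_on)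

lemma feasible_ball_compact: "compact ({z. g z \<in> nonpos_orth} \<inter> cball 0 r)"
proof (rule closed_Int_compact[OF _ compact_cball])
  show "closed {z. g z \<in> nonpos_orth}"
    unfolding nonpos_orth_def by (simp add: closed_Collect_all closed_Collect_le g_component_continuous)
qed

lemma g0_continuous: "continuous_on Oset g0"
  using g0_lip by (rule loc_lipschitz_imp_continuous_on)

lemmas g0_upper_C2_on_feasible_ball =
  upper_C2_on_compact[OF O_open g0_uC2 g0_continuous feasible_ball_compact
    order_trans[OF inf_le1 Gamma_sub_O]]

lemma xi_bounded:
  obtains B where "\<And>k. norm (\<xi> k) \<le> B"
proof -
  obtain r where r: "\<And>k. norm (x k) \<le> r" using x_bounded by (auto simp: bounded_iff)
  obtain \<rho> B where
    B: "\<And>z v. \<lbrakk>z \<in> {z. g z \<in> nonpos_orth} \<inter> cball 0 r; v \<in> limiting_subdiff g0 z\<rbrakk> \<Longrightarrow> norm v \<le> B"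
    by (rule g0_upper_C2_on_feasible_ball[where r = r]) blast
  have "norm (\<xi> k) \<le> B" for k by (rule B[of "x k"]) (simp_all add: r iterate_feasible xi_sub)
  then show ?thesis by (rule that)
qed

lemma mu_ge_min:
  assumes "j \<le> jk k"
  shows "\<mu>min \<le> \<mu> k j"
proof -
  have "\<mu> k 0 \<le> \<mu> k j"
  proof (rule backtracking_ge[OF tau_ge_1])
    show "0 \<le> \<mu> k 0" using mu0(1)[of k] mu_min_pos by simp
    fix j' assume "j' < j"
    with assms show "\<mu> k (Suc j') = \<mu> k j' \<or> \<mu> k (Suc j') = \<tau> * \<mu> k j'"
      using upd_L[of j' k] upd_mu[of j' k] by (cases "g (y k j') \<in> nonpos_orth") auto
  qed
  then show ?thesis using mu0(1)[of k] by simp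
qed

lemma model_sublevel_step_bounded:
  obtains D where "\<And>k j z. \<lbrakk>j \<le> jk k; Fmodel g0 \<phi> (x k) (\<xi> k) (Q k j) z \<le> Fmodel g0 \<phi> (x k) (\<xi> k) (Q k j) (x k)\<rbrakk>
     \<Longrightarrow> norm (z - x k) \<le> D"
proof -
  obtain r where r: "\<And>k. norm (x k) \<le> r" using x_bounded by (auto simp: bounded_iff)
  obtain c where c: "\<And>k. norm (\<xi> k) \<le> c" using xi_bounded by blast
  obtain b where "b \<ge> 0" and growth: "\<And>x y. norm x \<le> r \<Longrightarrow> \<phi> x - \<phi> y \<le> b * (norm (y - x) + 1)"
    using convex_on_lower_affine_growth[OF phi_convex] by blast
  have "norm (z - x k) \<le> max 1 ((c + 2 * b) / (\<mu>min / 2))"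
    if "j \<le> jk k" and "Fmodel g0 \<phi> (x k) (\<xi> k) (Q k j) z \<le> Fmodel g0 \<phi> (x k) (\<xi> k) (Q k j) (x k)" for k j z
  proof (rule Fmodel_sublevel_norm_le[OF mu_min_pos _ c \<open>b \<ge> 0\<close> growth[OF r] that(2)])
    fix u :: 'a
    have "\<mu>min * (norm u)\<^sup>2 \<le> \<mu> k j * (norm u)\<^sup>2" using mu_ge_min[OF that(1)] by (simp add: mult_right_mono)
    then show "\<mu>min * (norm u)\<^sup>2 \<le> u \<bullet> Q k j u" using Q_lower[OF that(1)] by (rule order_trans)
  qed
  then show ?thesis by (rule that)
qed

lemma iterates_bounded:
  obtains R where "\<And>k. norm (x k) \<le> R" "\<And>k j. j \<le> jk k \<Longrightarrow> norm (y k j) \<le> R"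
    "\<And>k. norm (xbar k (jk k)) \<le> R"
proof -
  obtain r where r: "\<And>k. norm (x k) \<le> r" using x_bounded by (auto simp: bounded_iff)
  obtain D where D: "\<And>k j z. \<lbrakk>j \<le> jk k; Fmodel g0 \<phi> (x k) (\<xi> k) (Q k j) z \<le> Fmodel g0 \<phi> (x k) (\<xi> k) (Q k j) (x k)\<rbrakk>
     \<Longrightarrow> norm (z - x k) \<le> D"
    using model_sublevel_step_bounded by blast
  have near: "norm z \<le> r + D" if "norm (z - x k) \<le> D" for z k
    using r[of k] that norm_triangle_sub[of z "x k"] by linarith
  show ?thesis
  proof (rule that)
    show "norm (x k) \<le> r + D" for k using near[of "x k" k] D[of 0 k "x k"] by simp
    show "norm (y k j) \<le> r + D" if "j \<le> jk k" for k j
      by (rule near[OF D[OF that y_desc[OF that]]])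
    \<comment> \<open>\<open>x k\<close> itself is feasible for the subproblem defining \<open>xbar\<close>\<close>
    have "Fmodel g0 \<phi> (x k) (\<xi> k) (Q k (jk k)) (xbar k (jk k)) \<le> Fmodel g0 \<phi> (x k) (\<xi> k) (Q k (jk k)) (x k)" for k
      using xbar_min iterate_feasible by (simp add: Gfun_self)
    then show "norm (xbar k (jk k)) \<le> r + D" for k by (rule near[OF D[OF order_refl]])
  qed
qed

lemma g_upper_model:
  obtains \<rho> Vb where "\<And>k. norm (V k) \<le> Vb"
    "\<And>k j i. j \<le> jk k \<Longrightarrow> g (y k j) $ i \<le> g (x k) $ i + V k $ i \<bullet> (y k j - x k) + \<rho> / 2 * (norm (y k j - x k))\<^sup>2"
proof -
  obtain R where x: "\<And>k. norm (x k) \<le> R" and y: "\<And>k j. j \<le> jk k \<Longrightarrow> norm (y k j) \<le> R"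
    and "\<And>k. norm (xbar k (jk k)) \<le> R"
    using iterates_bounded by blast
  have "\<forall>z\<in>UNIV. upper_C2_at (\<lambda>w. g w $ i) z" for i using g_uC2 by simp
  then obtain \<rho> Vb where "\<rho> \<ge> 0" and
    bound: "\<And>z V. \<lbrakk>z \<in> cball 0 R; \<And>i. V $ i \<in> limiting_subdiff (\<lambda>w. g w $ i) z\<rbrakk> \<Longrightarrow> norm V \<le> Vb" and
    model: "\<And>z v w i. \<lbrakk>z \<in> cball 0 R; v \<in> limiting_subdiff (\<lambda>w. g w $ i) z; w \<in> cball 0 R\<rbrakk>
       \<Longrightarrow> g w $ i \<le> g z $ i + v \<bullet> (w - z) + \<rho> / 2 * (norm (w - z))\<^sup>2"
    using upper_C2_components_on_compact[OF open_UNIV _ g_component_continuous compact_cball[of 0 R] subset_UNIV]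
    by blast
  show ?thesis
  proof (rule that)
    show "norm (V k) \<le> Vb" for k by (rule bound[of "x k"]) (simp_all add: x V_sub)
    show "g (y k j) $ i \<le> g (x k) $ i + V k $ i \<bullet> (y k j - x k) + \<rho> / 2 * (norm (y k j - x k))\<^sup>2"
      if "j \<le> jk k" for k j i
      by (rule model[of "x k"]) (simp_all add: x y[OF that] V_sub)
  qed
qed

lemma trial_feasible_if_L_large:
  obtains T where "\<And>k j. \<lbrakk>j \<le> jk k; \<forall>i. T \<le> L k j $ i\<rbrakk> \<Longrightarrow> g (y k j) \<in> nonpos_orth"
proof -
  obtain \<rho> Vb where "\<And>k. norm (V k) \<le> Vb" and \<rho>: "\<And>k j i. j \<le> jk k \<Longrightarrow>
      g (y k j) $ i \<le> g (x k) $ i + V k $ i \<bullet> (y k j - x k) + \<rho> / 2 * (norm (y k j - x k))\<^sup>2"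
    using g_upper_model by metis
  have "g (y k j) $ i \<le> 0" if j: "j \<le> jk k" and large: "\<forall>i. \<beta>C + \<rho> \<le> L k j $ i" for k j i
  proof -
    define n where "n = norm (y k j - x k)"
    have "Gfun g (y k j) (x k) (V k) (L k j) $ i \<le> \<beta>C / 2 * n\<^sup>2"
      using component_le_of_residual_le[OF y_feas[OF j]] by (simp add: n_def)
    then have "g (x k) $ i + V k $ i \<bullet> (y k j - x k) + n\<^sup>2 / 2 * L k j $ i \<le> \<beta>C / 2 * n\<^sup>2"
      by (simp add: Gfun_def n_def)
    moreover have "(\<beta>C + \<rho>) * n\<^sup>2 \<le> L k j $ i * n\<^sup>2"
      using large by (simp add: mult_right_mono)
    ultimately show ?thesis using \<rho>[OF j, of i] by (simp add: n_def algebra_simps)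
  qed
  then show ?thesis using that[of "\<beta>C + \<rho>"] by (simp add: nonpos_orth_def)
qed

lemma L_scaled: "j \<le> jk k \<Longrightarrow> \<exists>s\<ge>1. L k j = s *\<^sub>R L k 0"
proof (induction j)
  case 0
  then show ?case by (intro exI[of _ 1]) simp
next
  case (Suc j)
  then obtain s where s: "s \<ge> 1" "L k j = s *\<^sub>R L k 0" by auto
  have j: "j < jk k" using Suc.prems by simp
  show ?case
  proof (cases "g (y k j) \<in> nonpos_orth")
    case True
    then show ?thesis using upd_mu[OF j] s by auto
  next
    case False
    then have "L k (Suc j) = (\<tau> * s) *\<^sub>R L k 0" using upd_L[OF j] s by simp
    moreover have "1 \<le> \<tau> * s" using mult_mono[of 1 \<tau> 1 s] tau_ge_1 s(1) by simp
    ultimately show ?thesis by blast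
  qed
qed

text \<open>All components of \<open>L k j\<close> are scaled by the same factor, so their ratios stay within
  \<open>Lmax / Lmin\<close>: one component below the feasibility threshold keeps all of them bounded.\<close>
lemma L_growth_threshold:
  obtains T where "\<And>k j i. \<lbrakk>j < jk k; g (y k j) \<notin> nonpos_orth\<rbrakk> \<Longrightarrow> L k j $ i < T"
proof -
  obtain T where T: "\<And>k j. \<lbrakk>j \<le> jk k; \<forall>i. T \<le> L k j $ i\<rbrakk> \<Longrightarrow> g (y k j) \<in> nonpos_orth"
    using trial_feasible_if_L_large by metis
  have "L k j $ i < T * (Lmax / Lmin)" if j: "j < jk k" and infeasible: "g (y k j) \<notin> nonpos_orth" for k j i
  proof -
    have "\<not> (\<forall>i. T \<le> L k j $ i)" using T[of j k] j infeasible by auto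
    then obtain i' where "L k j $ i' < T" by (meson not_le)
    obtain s where "s \<ge> 1" and s: "L k j = s *\<^sub>R L k 0" using L_scaled[of j k] j by auto
    have "s * Lmin \<le> s * L k 0 $ i'" using L0(1)[of k i'] \<open>s \<ge> 1\<close> by (simp add: mult_left_mono)
    also have "\<dots> = L k j $ i'" using s by simp
    finally have "s * Lmin < T" using \<open>L k j $ i' < T\<close> by simp
    then have "s * Lmin * (Lmax / Lmin) < T * (Lmax / Lmin)"
      using par_L by (intro mult_strict_right_mono) auto
    moreover have "L k j $ i \<le> s * Lmax" using s L0(2)[of k i] \<open>s \<ge> 1\<close> by (simp add: mult_left_mono)
    ultimately show ?thesis using par_L by simp
  qed
  then show ?thesis by (rule that)
qed

lemma L_bounded: "\<exists>\<beta>L>0. \<forall>k. norm (L k (jk k)) \<le> \<beta>L"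
proof -
  obtain T where T: "\<And>k j i. \<lbrakk>j < jk k; g (y k j) \<notin> nonpos_orth\<rbrakk> \<Longrightarrow> L k j $ i < T"
    using L_growth_threshold by metis
  define BL where "BL = max Lmax (\<tau> * T)"
  have component: "\<bar>L k (jk k) $ i\<bar> \<le> BL" for k i
  proof -
    obtain s where "s \<ge> 1" "L k (jk k) = s *\<^sub>R L k 0" using L_scaled by blast
    then have "0 \<le> L k (jk k) $ i" using L0(1)[of k i] par_L by simp
    moreover have "L k (jk k) $ i \<le> max (L k 0 $ i) (\<tau> * T)"
    proof (rule backtracking_le)
      show "\<tau> \<ge> 0" using tau_ge_1 by simp
      fix j assume "j < jk k"
      then show "L k (Suc j) $ i = L k j $ i \<or> L k j $ i < T \<and> L k (Suc j) $ i = \<tau> * L k j $ i"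
        using upd_L[of j k] upd_mu[of j k] T[of j k i] by (cases "g (y k j) \<in> nonpos_orth") auto
    qed
    ultimately show ?thesis using L0(2)[of k i] by (auto simp: BL_def)
  qed
  have "norm (L k (jk k)) \<le> CARD('m) * BL" for k
  proof -
    have "norm (L k (jk k)) \<le> (\<Sum>i\<in>UNIV. \<bar>L k (jk k) $ i\<bar>)" by (rule norm_le_l1_cart)
    also have "\<dots> \<le> CARD('m) * BL" using component sum_mono[of UNIV "\<lambda>i. \<bar>L k (jk k) $ i\<bar>" "\<lambda>_. BL"] by simp
    finally show ?thesis .
  qed
  moreover have "CARD('m) * BL > 0" using par_L by (simp add: BL_def)
  ultimately show ?thesis by blast
qed

lemma mu_growth_threshold:
  obtains T where "\<And>k j. \<lbrakk>j < jk k; g (y k j) \<in> nonpos_orth\<rbrakk> \<Longrightarrow> \<mu> k j < T"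
proof -
  obtain R where x: "\<And>k. norm (x k) \<le> R" and y: "\<And>k j. j \<le> jk k \<Longrightarrow> norm (y k j) \<le> R"
    and "\<And>k. norm (xbar k (jk k)) \<le> R"
    using iterates_bounded by metis
  obtain \<rho> Vb where "\<rho> \<ge> 0"
    and "\<And>z v. \<lbrakk>z \<in> {z. g z \<in> nonpos_orth} \<inter> cball 0 R; v \<in> limiting_subdiff g0 z\<rbrakk> \<Longrightarrow> norm v \<le> Vb"
    and model: "\<And>z v w. \<lbrakk>z \<in> {z. g z \<in> nonpos_orth} \<inter> cball 0 R; v \<in> limiting_subdiff g0 z;
        w \<in> {z. g z \<in> nonpos_orth} \<inter> cball 0 R\<rbrakk>
       \<Longrightarrow> g0 w \<le> g0 z + v \<bullet> (w - z) + \<rho> / 2 * (norm (w - z))\<^sup>2"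
    using g0_upper_C2_on_feasible_ball[where r = R] by metis
  \<comment> \<open>once \<open>\<mu> \<ge> \<rho> + \<alpha>\<close>, the upper model of \<open>g0\<close> turns model decrease into sufficient decrease\<close>
  have "\<mu> k j < \<rho> + \<alpha>" if j: "j < jk k" and feasible: "g (y k j) \<in> nonpos_orth" for k j
  proof (rule ccontr)
    assume "\<not> \<mu> k j < \<rho> + \<alpha>"
    define d where "d = y k j - x k"
    have "g0 (y k j) \<le> g0 (x k) + \<xi> k \<bullet> d + \<rho> / 2 * (norm d)\<^sup>2"
      unfolding d_def
      by (rule model) (simp_all add: x y[OF less_imp_le[OF j]] feasible iterate_feasible xi_sub)
    moreover have "\<xi> k \<bullet> d + 1/2 * (d \<bullet> Q k j d) + \<phi> (y k j) \<le> \<phi> (x k)"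
      using y_desc[OF less_imp_le[OF j]] by (simp add: Fmodel_def d_def)
    moreover have "(\<rho> + \<alpha>) * (norm d)\<^sup>2 \<le> \<mu> k j * (norm d)\<^sup>2"
      using \<open>\<not> \<mu> k j < \<rho> + \<alpha>\<close> by (simp add: mult_right_mono)
    with Q_lower[OF less_imp_le[OF j]] have "(\<rho> + \<alpha>) * (norm d)\<^sup>2 \<le> d \<bullet> Q k j d"
      by (rule order_trans[rotated])
    ultimately have "g0 (y k j) + \<phi> (y k j) \<le> g0 (x k) + \<phi> (x k) - \<alpha> / 2 * (norm d)\<^sup>2"
      by (simp add: algebra_simps)
    then show False
      using reject[OF j feasible] feasible iterate_feasible[of k] by (simp add: Fobj_def d_def)
  qed
  then show ?thesis by (rule that)
qed

lemma mu_bounded: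
  obtains B where "\<And>k. \<mu>min \<le> \<mu> k (jk k)" "\<And>k. \<mu> k (jk k) \<le> B"
proof -
  obtain T where T: "\<And>k j. \<lbrakk>j < jk k; g (y k j) \<in> nonpos_orth\<rbrakk> \<Longrightarrow> \<mu> k j < T"
    using mu_growth_threshold by metis
  have "\<mu> k (jk k) \<le> max (\<mu> k 0) (\<tau> * T)" for k
  proof (rule backtracking_le)
    show "\<tau> \<ge> 0" using tau_ge_1 by simp
    fix j assume "j < jk k"
    then show "\<mu> k (Suc j) = \<mu> k j \<or> \<mu> k j < T \<and> \<mu> k (Suc j) = \<tau> * \<mu> k j"
      using upd_L[of j k] upd_mu[of j k] T[of j k] by (cases "g (y k j) \<in> nonpos_orth") auto
  qed
  then have "\<mu> k (jk k) \<le> max \<mu>max (\<tau> * T)" for k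
    using max.mono[OF mu0(2)[of k] order_refl] by (rule order_trans)
  then show ?thesis by (rule that[OF mu_ge_min[OF order_refl]])
qed

lemma Q_onorm_le: "onorm (Q k (jk k)) \<le> \<mu> k (jk k) + M"
proof (rule onorm_self_adjoint_le[OF Q_linear Q_symmetric _ Q_upper])
  fix u :: 'a
  have "0 \<le> \<mu> k (jk k) * (norm u)\<^sup>2" using mu_ge_min[of "jk k" k] mu_min_pos by simp
  then show "0 \<le> u \<bullet> Q k (jk k) u" using Q_lower[of "jk k" k u] by simp
qed

lemma xbar_xi_V_bounded: "bounded (range (\<lambda>k. (xbar k (jk k), \<xi> k, V k)))"
proof -
  obtain R where "\<And>k. norm (x k) \<le> R" "\<And>k j. j \<le> jk k \<Longrightarrow> norm (y k j) \<le> R"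
    and xbar: "\<And>k. norm (xbar k (jk k)) \<le> R"
    using iterates_bounded by metis
  obtain B\<xi> where \<xi>: "\<And>k. norm (\<xi> k) \<le> B\<xi>" using xi_bounded by metis
  obtain \<rho> BV where V: "\<And>k. norm (V k) \<le> BV"
    and "\<And>k j i. j \<le> jk k \<Longrightarrow> g (y k j) $ i \<le> g (x k) $ i + V k $ i \<bullet> (y k j - x k) + \<rho> / 2 * (norm (y k j - x k))\<^sup>2"
    using g_upper_model by metis
  have "range (\<lambda>k. (xbar k (jk k), \<xi> k, V k)) \<subseteq> cball 0 R \<times> cball 0 B\<xi> \<times> cball 0 BV"
    using xbar \<xi> V by auto
  then show ?thesis by (rule bounded_subset[rotated]) (intro bounded_Times bounded_cball)
qed

lemma mu_range_bounded: "bounded (range (\<lambda>k. \<mu> k (jk k)))"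
proof -
  obtain B where "\<And>k. \<mu>min \<le> \<mu> k (jk k)" "\<And>k. \<mu> k (jk k) \<le> B" using mu_bounded by metis
  then show ?thesis by (intro bounded_subset[OF bounded_closed_interval[of \<mu>min B]]) auto
qed

lemma Q_bounded: "\<exists>\<beta>Q>0. \<forall>k. onorm (Q k (jk k)) \<le> \<beta>Q"
proof -
  obtain B where lower: "\<And>k. \<mu>min \<le> \<mu> k (jk k)" and upper: "\<And>k. \<mu> k (jk k) \<le> B"
    using mu_bounded by metis
  have "onorm (Q k (jk k)) \<le> B + M" for k using Q_onorm_le[of k] upper[of k] by linarith
  moreover have "B + M > 0" using lower[of 0] upper[of 0] mu_min_pos M_nonneg by linarith
  ultimately show ?thesis by blast
qed
end

theorem lemma4p1:
  fixes g0 :: "'a::euclidean_space \<Rightarrow> real"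
    and g :: "'a \<Rightarrow> real^'m"
    and \<phi> :: "'a \<Rightarrow> real"
    and Oset :: "'a set"
    and \<mu>min \<mu>max Lmin Lmax M \<beta>C \<beta>S \<alpha> \<tau> :: real
    and x :: "nat \<Rightarrow> 'a"
    and \<xi> :: "nat \<Rightarrow> 'a"
    and V :: "nat \<Rightarrow> 'a^'m"
    and \<mu> :: "nat \<Rightarrow> nat \<Rightarrow> real"
    and L :: "nat \<Rightarrow> nat \<Rightarrow> real^'m"
    and Q :: "nat \<Rightarrow> nat \<Rightarrow> 'a \<Rightarrow> 'a"
    and xbar y v :: "nat \<Rightarrow> nat \<Rightarrow> 'a"
    and lam :: "nat \<Rightarrow> nat \<Rightarrow> real^'m"
    and jk :: "nat \<Rightarrow> nat"
  \<comment> \<open>Assumption 1\<close>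
  assumes O_open: "open Oset" and O_convex: "convex Oset"
    and Gamma_sub_O: "{z. g z \<in> nonpos_orth} \<subseteq> Oset"
    and g0_lip: "\<forall>z\<in>Oset. loc_lipschitz_at g0 z"
    and g0_uC2: "\<forall>z\<in>Oset. upper_C2_at g0 z"
    and g_lip: "\<forall>i z. loc_lipschitz_at (\<lambda>w. g w $ i) z"
    and g_uC2: "\<forall>i z. upper_C2_at (\<lambda>w. g w $ i) z"
    and phi_convex: "convex_on UNIV \<phi>"
    and F_bdd: "\<exists>c. \<forall>z. g z \<in> nonpos_orth \<longrightarrow> Fobj g0 g \<phi> z \<ge> ereal c"
  \<comment> \<open>parameters\<close>
    and par_mu: "0 < \<mu>min" "\<mu>min \<le> \<mu>max"
    and par_L: "0 < Lmin" "Lmin \<le> Lmax"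
    and par_pos: "M > 0" "\<beta>C > 0" "\<beta>S > 0" "\<alpha> > 0"
    and par_tau: "\<tau> > 1"
  \<comment> \<open>Algorithm iMBA\<close>
    and x0: "g (x 0) \<in> nonpos_orth"
    and xi_sub: "\<forall>k. \<xi> k \<in> limiting_subdiff g0 (x k)"
    and V_sub: "\<forall>k i. V k $ i \<in> limiting_subdiff (\<lambda>w. g w $ i) (x k)"
    and mu0: "\<forall>k. \<mu>min \<le> \<mu> k 0 \<and> \<mu> k 0 \<le> \<mu>max"
    and L0: "\<forall>k i. Lmin \<le> L k 0 $ i \<and> L k 0 $ i \<le> Lmax"
    and Q_sa: "\<forall>k j. j \<le> jk k \<longrightarrow> linear (Q k j) \<and> (\<forall>u w. Q k j u \<bullet> w = u \<bullet> Q k j w)"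
    and Q_bnd: "\<forall>k j. j \<le> jk k \<longrightarrow> (\<forall>u. \<mu> k j * (norm u)\<^sup>2 \<le> u \<bullet> Q k j u \<and>
                                           u \<bullet> Q k j u \<le> (\<mu> k j + M) * (norm u)\<^sup>2)"
    and xbar_min: "\<forall>k j. j \<le> jk k \<longrightarrow>
          Gfun g (xbar k j) (x k) (V k) (L k j) \<in> nonpos_orth \<and>
          (\<forall>z. Gfun g z (x k) (V k) (L k j) \<in> nonpos_orth \<longrightarrow>
               Fmodel g0 \<phi> (x k) (\<xi> k) (Q k j) (xbar k j) \<le> Fmodel g0 \<phi> (x k) (\<xi> k) (Q k j) z)"
    and v_sub: "\<forall>k j. j \<le> jk k \<longrightarrow> v k j \<in> limiting_subdiff \<phi> (y k j)"
    and lam_nn: "\<forall>k j i. j \<le> jk k \<longrightarrow> lam k j $ i \<ge> 0"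
    and y_desc: "\<forall>k j. j \<le> jk k \<longrightarrow>
          Fmodel g0 \<phi> (x k) (\<xi> k) (Q k j) (y k j) \<le> Fmodel g0 \<phi> (x k) (\<xi> k) (Q k j) (x k)"
    and y_feas: "\<forall>k j. j \<le> jk k \<longrightarrow>
          max 0 (- (lam k j \<bullet> Gfun g (y k j) (x k) (V k) (L k j)))
          + Max (range (\<lambda>i. max 0 (Gfun g (y k j) (x k) (V k) (L k j) $ i)))
          \<le> \<beta>C / 2 * (norm (y k j - x k))\<^sup>2"
    and y_stat: "\<forall>k j. j \<le> jk k \<longrightarrow>
          norm (\<xi> k + Q k j (y k j - x k) + v k j + (\<Sum>i\<in>UNIV. lam k j $ i *\<^sub>R V k $ i)
                + (L k j \<bullet> lam k j) *\<^sub>R (y k j - x k))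
          \<le> \<beta>S * norm (y k j - x k)"
    and accept: "\<forall>k. g (y k (jk k)) \<in> nonpos_orth \<and>
          Fobj g0 g \<phi> (y k (jk k)) \<le> Fobj g0 g \<phi> (x k) - ereal (\<alpha> / 2 * (norm (y k (jk k) - x k))\<^sup>2)"
    and reject: "\<forall>k j. j < jk k \<longrightarrow>
          \<not> (g (y k j) \<in> nonpos_orth \<and>
             Fobj g0 g \<phi> (y k j) \<le> Fobj g0 g \<phi> (x k) - ereal (\<alpha> / 2 * (norm (y k j - x k))\<^sup>2))"
    and upd_L: "\<forall>k j. j < jk k \<longrightarrow> g (y k j) \<notin> nonpos_orth \<longrightarrow>
          L k (Suc j) = \<tau> *\<^sub>R L k j \<and> \<mu> k (Suc j) = \<mu> k j"
    and upd_mu: "\<forall>k j. j < jk k \<longrightarrow> g (y k j) \<in> nonpos_orth \<longrightarrow>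
          L k (Suc j) = L k j \<and> \<mu> k (Suc j) = \<tau> * \<mu> k j"
    and x_next: "\<forall>k. x (Suc k) = y k (jk k)"
  \<comment> \<open>Assumption 2\<close>
    and A2: "\<forall>k j. j \<le> jk k \<longrightarrow>
          metric_subregular_orth (\<lambda>z. Gfun g z (x k) (V k) (L k j)) (xbar k j)"
  \<comment> \<open>Assumption 3\<close>
    and A3: "bounded (range x)"
  shows "bounded (range (\<lambda>k. (xbar k (jk k), \<xi> k, V k)))
         \<and> (\<exists>\<beta>L>0. \<forall>k. norm (L k (jk k)) \<le> \<beta>L)
         \<and> bounded (range (\<lambda>k. \<mu> k (jk k)))
         \<and> (\<exists>\<beta>Q>0. \<forall>k. onorm (Q k (jk k)) \<le> \<beta>Q)"
proof -
  interpret imba_run g0 g \<phi> Oset \<mu>min \<mu>max Lmin Lmax M \<beta>C \<alpha> \<tau> x \<xi> V \<mu> L Q xbar y lam jk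
  proof (rule imba_run.intro)
    show "\<And>k j. j \<le> jk k \<Longrightarrow> max 0 (- (lam k j \<bullet> Gfun g (y k j) (x k) (V k) (L k j)))
        + Max (range (\<lambda>i. max 0 (Gfun g (y k j) (x k) (V k) (L k j) $ i))) \<le> \<beta>C / 2 * (norm (y k j - x k))\<^sup>2"
      using y_feas by blast
    show "\<And>k j. \<lbrakk>j < jk k; g (y k j) \<in> nonpos_orth\<rbrakk> \<Longrightarrow>
        \<not> Fobj g0 g \<phi> (y k j) \<le> Fobj g0 g \<phi> (x k) - ereal (\<alpha> / 2 * (norm (y k j - x k))\<^sup>2)"
      using reject by blast
  qed (simp_all add: assms less_imp_le)
  show ?thesis using xbar_xi_V_bounded L_bounded mu_range_bounded Q_bounded by blast
qed

end
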